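(* Let $G_1$ and $G_2$ be connected graphs, let $H=G_1+G_2$ be their join, and let $g$ be a constant function from the vertex set of the first copy of $H$ to the vertex set of the second copy of $H$. Then $fix(F_H)=2\,fix(H)-i$ for some $i\in\{0,1\}$.
   Context: The join $G_1+G_2$ of graphs with disjoint vertex sets is the union $G_1\cup G_2$ together with all edges joining every vertex of $G_1$ to every vertex of $G_2$. A set $S\subseteq V(H)$ is a fixing set of a graph $H$ if the only automorphism of $H$ fixing every vertex of $S$ is the identity; $fix(H)$ is the minimum cardinality of a fixing set of $H$. Functigraph: let $H_1,H_2$ be disjoint copies of a connected graph $H$, with $A=V(H_1)$, $B=V(H_2)$, and let $g:A\to B$ be a function. The functigraph $F_H$ has vertex set $A\cup B$ and edge set $E(H_1)\cup E(H_2)\cup\{ug(u):u\in A\}$. *)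

theory Defs
  imports Main
begin

definition simple_graph :: "'a set \<Rightarrow> ('a \<Rightarrow> 'a \<Rightarrow> bool) \<Rightarrow> bool" where
  "simple_graph V E \<longleftrightarrow> finite V \<and> (\<forall>u v. E u v \<longrightarrow> u \<in> V \<and> v \<in> V)
     \<and> (\<forall>u v. E u v \<longrightarrow> E v u) \<and> (\<forall>u. \<not> E u u)"

definition connected_graph :: "'a set \<Rightarrow> ('a \<Rightarrow> 'a \<Rightarrow> bool) \<Rightarrow> bool" where
  "connected_graph V E \<longleftrightarrow> simple_graph V E \<and> V \<noteq> {} \<and>
     (\<forall>u\<in>V. \<forall>v\<in>V. E\<^sup>*\<^sup>* u v)"

definition automorphisms :: "'a set \<Rightarrow> ('a \<Rightarrow> 'a \<Rightarrow> bool) \<Rightarrow> ('a \<Rightarrow> 'a) set" where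
  "automorphisms V E = {f. bij_betw f V V \<and> (\<forall>x. x \<notin> V \<longrightarrow> f x = x)
     \<and> (\<forall>u\<in>V. \<forall>v\<in>V. E u v \<longleftrightarrow> E (f u) (f v))}"

definition fixing_set :: "'a set \<Rightarrow> ('a \<Rightarrow> 'a \<Rightarrow> bool) \<Rightarrow> 'a set \<Rightarrow> bool" where
  "fixing_set V E S \<longleftrightarrow> S \<subseteq> V \<and>
     (\<forall>f\<in>automorphisms V E. (\<forall>s\<in>S. f s = s) \<longrightarrow> (\<forall>v\<in>V. f v = v))"

definition fixing_number :: "'a set \<Rightarrow> ('a \<Rightarrow> 'a \<Rightarrow> bool) \<Rightarrow> nat" where
  "fixing_number V E = (LEAST n. \<exists>S. fixing_set V E S \<and> card S = n)"

definition join_vertices :: "'a set \<Rightarrow> 'b set \<Rightarrow> ('a + 'b) set" where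
  "join_vertices V1 V2 = Inl ` V1 \<union> Inr ` V2"

fun join_edges :: "'a set \<Rightarrow> ('a \<Rightarrow> 'a \<Rightarrow> bool) \<Rightarrow> 'b set \<Rightarrow> ('b \<Rightarrow> 'b \<Rightarrow> bool)
    \<Rightarrow> ('a + 'b) \<Rightarrow> ('a + 'b) \<Rightarrow> bool" where
  "join_edges V1 E1 V2 E2 (Inl x) (Inl y) = E1 x y"
| "join_edges V1 E1 V2 E2 (Inr x) (Inr y) = E2 x y"
| "join_edges V1 E1 V2 E2 (Inl x) (Inr y) = (x \<in> V1 \<and> y \<in> V2)"
| "join_edges V1 E1 V2 E2 (Inr x) (Inl y) = (x \<in> V2 \<and> y \<in> V1)"

text \<open>Functigraph of H = (V,E) w.r.t. g : A \<rightarrow> B, where A = Inl ` V is the first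
  copy and B = Inr ` V the second copy; g is given as a map V \<rightarrow> V
  (vertex u of the first copy is sent to vertex g u of the second copy).\<close>
definition functigraph_vertices :: "'v set \<Rightarrow> ('v + 'v) set" where
  "functigraph_vertices V = Inl ` V \<union> Inr ` V"

fun functigraph_edges :: "'v set \<Rightarrow> ('v \<Rightarrow> 'v \<Rightarrow> bool) \<Rightarrow> ('v \<Rightarrow> 'v)
    \<Rightarrow> ('v + 'v) \<Rightarrow> ('v + 'v) \<Rightarrow> bool" where
  "functigraph_edges V E g (Inl x) (Inl y) = E x y"
| "functigraph_edges V E g (Inr x) (Inr y) = E x y"
| "functigraph_edges V E g (Inl x) (Inr y) = (x \<in> V \<and> y = g x)"
| "functigraph_edges V E g (Inr y) (Inl x) = (x \<in> V \<and> y = g x)"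

end

theory Submission
  imports Defs
begin

text \<open>Let H be connected with at least two vertices and let g be constant with value c.
  In the functigraph, the vertex c of the second copy is adjacent to the whole first copy
  and to a neighbour of c, so it is the unique vertex of maximum degree and every
  automorphism fixes it. An automorphism moving a vertex of the first copy into the second
  copy would, by connectivity, move the whole first copy into the second copy minus c,
  which is too small. Hence every automorphism acts as a pair (\<sigma>, \<tau>) of automorphisms
  of H with \<tau> c = c, and every such pair is an automorphism. So doubling a minimum fixing
  set of H fixes the functigraph, while a minimum fixing set of the functigraph splits into
  two sets, one fixing H and one fixing H once c is added.
  The join of two nonempty connected graphs is connected and has at least two vertices.\<close>

section \<open>Fixing numbers and neighbourhoods\<close>

lemma fixing_number_le_card: "fixing_set V E S \<Longrightarrow> fixing_number V E \<le> card S"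
  unfolding fixing_number_def by (rule Least_le) blast

lemma minimum_fixing_set_exists:
  "\<exists>S. fixing_set V E S \<and> card S = fixing_number V E"
proof -
  have "fixing_set V E V" by (simp add: fixing_set_def)
  then have "\<exists>S. fixing_set V E S \<and> card S = card V" by blast
  then show ?thesis unfolding fixing_number_def by (rule LeastI)
qed

definition neighbourhood :: "'a set \<Rightarrow> ('a \<Rightarrow> 'a \<Rightarrow> bool) \<Rightarrow> 'a \<Rightarrow> 'a set" where
  "neighbourhood V E x = {y \<in> V. E x y}"

lemma automorphism_image_neighbourhood:
  assumes f: "f \<in> automorphisms V E" and x: "x \<in> V"
  shows "f ` neighbourhood V E x = neighbourhood V E (f x)"
proof -
  have b: "bij_betw f V V" and e: "\<forall>u\<in>V. \<forall>v\<in>V. E u v \<longleftrightarrow> E (f u) (f v)"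
    using f by (auto simp: automorphisms_def)
  show ?thesis
  proof
    show "f ` neighbourhood V E x \<subseteq> neighbourhood V E (f x)"
      using b e x by (auto simp: neighbourhood_def bij_betw_def)
    show "neighbourhood V E (f x) \<subseteq> f ` neighbourhood V E x"
    proof
      fix z assume z: "z \<in> neighbourhood V E (f x)"
      then obtain y where "y \<in> V" "z = f y"
        using b by (auto simp: neighbourhood_def bij_betw_def)
      then show "z \<in> f ` neighbourhood V E x"
        using e x z by (auto simp: neighbourhood_def)
    qed
  qed
qed

lemma card_neighbourhood_automorphism:
  assumes f: "f \<in> automorphisms V E" and x: "x \<in> V"
  shows "card (neighbourhood V E (f x)) = card (neighbourhood V E x)"
proof -
  have "inj_on f (neighbourhood V E x)"
    using f by (auto simp: automorphisms_def bij_betw_def neighbourhood_def intro: inj_on_subset)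
  then show ?thesis
    using automorphism_image_neighbourhood[OF f x] by (metis card_image)
qed

lemma automorphism_induced_on_copy:
  assumes f: "f \<in> automorphisms V F" and h: "inj h" and hW: "h ` W \<subseteq> V"
    and fW: "f ` h ` W = h ` W"
    and edges: "\<And>u v. u \<in> W \<Longrightarrow> v \<in> W \<Longrightarrow> E u v \<longleftrightarrow> F (h u) (h v)"
  shows "\<exists>\<sigma>\<in>automorphisms W E. \<forall>x\<in>W. f (h x) = h (\<sigma> x)"
proof -
  define \<sigma> where "\<sigma> x = (if x \<in> W then the_inv h (f (h x)) else x)" for x
  have \<sigma>: "f (h x) = h (\<sigma> x)" "\<sigma> x \<in> W" if "x \<in> W" for x
  proof -
    have "f (h x) \<in> h ` W" using fW that by (metis imageI)
    then obtain y where "y \<in> W" "f (h x) = h y" by blast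
    then show "f (h x) = h (\<sigma> x)" "\<sigma> x \<in> W" using that h by (simp_all add: \<sigma>_def the_inv_f_f)
  qed
  have inj_f: "inj_on f V" and eF: "\<forall>u\<in>V. \<forall>v\<in>V. F u v \<longleftrightarrow> F (f u) (f v)"
    using f by (auto simp: automorphisms_def bij_betw_def)
  have "inj_on \<sigma> W"
  proof (rule inj_onI)
    fix x y assume "x \<in> W" "y \<in> W" "\<sigma> x = \<sigma> y"
    then have "f (h x) = f (h y)" using \<sigma>(1) by simp
    then show "x = y" using inj_f hW h \<open>x \<in> W\<close> \<open>y \<in> W\<close> by (meson image_subset_iff inj_onD injD)
  qed
  moreover have "\<sigma> ` W = W"
  proof
    show "\<sigma> ` W \<subseteq> W" using \<sigma>(2) by blast
    show "W \<subseteq> \<sigma> ` W"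
    proof
      fix y assume "y \<in> W"
      then have "h y \<in> f ` h ` W" by (simp add: fW)
      then obtain x where "x \<in> W" "f (h x) = h y" by auto
      then show "y \<in> \<sigma> ` W" using \<sigma>(1) h by (metis image_eqI injD)
    qed
  qed
  moreover have "E u v \<longleftrightarrow> E (\<sigma> u) (\<sigma> v)" if "u \<in> W" "v \<in> W" for u v
  proof -
    have "E u v \<longleftrightarrow> F (f (h u)) (f (h v))" using that hW eF edges by blast
    then show ?thesis using that \<sigma> edges by simp
  qed
  moreover have "\<sigma> x = x" if "x \<notin> W" for x
    using that by (simp add: \<sigma>_def)
  ultimately have "\<sigma> \<in> automorphisms W E"
    unfolding automorphisms_def bij_betw_def by blast
  then show ?thesis using \<sigma>(1) by blast
qed

lemma bij_betw_map_sum: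
  assumes "bij_betw f A A'" "bij_betw g B B'"
  shows "bij_betw (map_sum f g) (A <+> B) (A' <+> B')"
proof -
  have "inj_on (map_sum f g) (A <+> B)"
    using assms unfolding bij_betw_def inj_on_def by fastforce
  moreover have "map_sum f g ` (A <+> B) = f ` A <+> g ` B"
    by (simp add: Plus_def image_Un image_image)
  ultimately show ?thesis using assms by (simp add: bij_betw_def)
qed

lemma connected_graph_neighbour_exists:
  assumes "connected_graph V E" "x \<in> V" "y \<in> V" "x \<noteq> y"
  shows "\<exists>m. E x m"
proof -
  have "E\<^sup>*\<^sup>* x y" using assms by (auto simp: connected_graph_def)
  then show ?thesis using \<open>x \<noteq> y\<close> by (metis converse_rtranclpE)
qed

section \<open>Functigraphs of a constant function\<close>

locale constant_functigraph =
  fixes W :: "'v set" and E :: "'v \<Rightarrow> 'v \<Rightarrow> bool" and g :: "'v \<Rightarrow> 'v" and c :: 'v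
  assumes connected: "connected_graph W E"
    and c_in_W: "c \<in> W"
    and nontrivial: "W \<noteq> {c}"
    and g_constant: "\<And>u. u \<in> W \<Longrightarrow> g u = c"
begin

abbreviation "FV \<equiv> functigraph_vertices W"
abbreviation "FE \<equiv> functigraph_edges W E g"

lemma finite_W: "finite W"
  and edges_in_W: "E u v \<Longrightarrow> u \<in> W \<and> v \<in> W"
  and irreflexive: "\<not> E u u"
  using connected by (auto simp: connected_graph_def simple_graph_def)

lemma card_W_pos: "0 < card W"
  using finite_W c_in_W by (auto simp: card_gt_0_iff)

lemma card_neighbourhood_hub: "card W + 1 \<le> card (neighbourhood FV FE (Inr c))"
proof -
  obtain v where "v \<in> W" "v \<noteq> c" using c_in_W nontrivial by blast
  then obtain m where m: "E c m"
    using connected_graph_neighbour_exists[OF connected c_in_W] by metis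
  have "insert (Inr m) (Inl ` W) \<subseteq> neighbourhood FV FE (Inr c)"
    using m edges_in_W g_constant by (auto simp: neighbourhood_def functigraph_vertices_def)
  moreover have "finite (neighbourhood FV FE (Inr c))"
    using finite_W by (simp add: neighbourhood_def functigraph_vertices_def)
  ultimately have "card (insert (Inr m) (Inl ` W)) \<le> card (neighbourhood FV FE (Inr c))"
    by (intro card_mono)
  then show ?thesis using finite_W by (simp add: card_insert_if card_image image_iff)
qed

lemma card_neighbourhood_non_hub:
  assumes "v \<in> FV" "v \<noteq> Inr c"
  shows "card (neighbourhood FV FE v) \<le> card W"
proof (cases v)
  case (Inl x)
  with assms have x: "x \<in> W" by (auto simp: functigraph_vertices_def)
  have "neighbourhood FV FE v \<subseteq> insert (Inr c) (Inl ` (W - {x}))"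
    using Inl x g_constant irreflexive by (auto simp: neighbourhood_def functigraph_vertices_def)
  then have "card (neighbourhood FV FE v) \<le> card (insert (Inr c) (Inl ` (W - {x})))"
    using finite_W by (intro card_mono) auto
  also have "\<dots> \<le> card W"
    using finite_W x card_W_pos by (simp add: card_insert_if card_image card_Diff_singleton)
  finally show ?thesis .
next
  case (Inr y)
  with assms have "neighbourhood FV FE v \<subseteq> Inr ` W"
    using g_constant by (auto simp: neighbourhood_def functigraph_vertices_def)
  then show ?thesis
    using finite_W card_mono[of "Inr ` W"] by (simp add: card_image)
qed

lemma automorphism_fixes_hub:
  assumes f: "f \<in> automorphisms FV FE"
  shows "f (Inr c) = Inr c"
proof (rule ccontr)
  assume "f (Inr c) \<noteq> Inr c"
  moreover have hub: "Inr c \<in> FV" using c_in_W by (simp add: functigraph_vertices_def)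
  moreover from f hub have "f (Inr c) \<in> FV" by (auto simp: automorphisms_def bij_betw_def)
  ultimately have "card (neighbourhood FV FE (f (Inr c))) \<le> card W"
    by (intro card_neighbourhood_non_hub)
  then show False
    using card_neighbourhood_automorphism[OF f hub] card_neighbourhood_hub by simp
qed

lemma automorphism_escape_propagates:
  assumes f: "f \<in> automorphisms FV FE"
    and p: "p \<in> FV" and q: "q \<in> FV" and "FE p q" and "q \<noteq> Inr c"
    and fp: "f p \<in> Inr ` (W - {c})"
  shows "f q \<in> Inr ` (W - {c})"
proof -
  have inj: "inj_on f FV" and fq: "f q \<in> FV" and "FE (f p) (f q)"
    using f p q \<open>FE p q\<close> by (auto simp: automorphisms_def bij_betw_def)
  moreover have "f q \<noteq> Inr c"
    using automorphism_fixes_hub[OF f] inj q \<open>q \<noteq> Inr c\<close> c_in_W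
    by (metis functigraph_vertices_def UnI2 imageI inj_onD)
  ultimately show ?thesis
    using fp g_constant by (cases "f q") (auto simp: functigraph_vertices_def)
qed

lemma automorphism_first_copy_into_first_copy:
  assumes f: "f \<in> automorphisms FV FE" and x: "x \<in> W"
  shows "f (Inl x) \<in> Inl ` W"
proof (rule ccontr)
  assume "f (Inl x) \<notin> Inl ` W"
  moreover have inj: "inj_on f FV" and "f (Inl x) \<in> FV"
    using f x by (auto simp: automorphisms_def bij_betw_def functigraph_vertices_def)
  moreover have "f (Inl x) \<noteq> Inr c"
    using automorphism_fixes_hub[OF f] inj x c_in_W
    by (metis functigraph_vertices_def UnI1 UnI2 imageI inj_onD sum.distinct(1))
  ultimately have "f (Inl x) \<in> Inr ` (W - {c})" by (auto simp: functigraph_vertices_def)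
  have "f (Inl y) \<in> Inr ` (W - {c})" if "E\<^sup>*\<^sup>* x y" for y
    using that
  proof (induction rule: rtranclp_induct)
    case (step y z)
    then show ?case
      using automorphism_escape_propagates[OF f, of "Inl y" "Inl z"] edges_in_W
      by (auto simp: functigraph_vertices_def)
  qed fact
  then have "f ` Inl ` W \<subseteq> Inr ` (W - {c})"
    using connected x by (auto simp: connected_graph_def)
  moreover have "inj_on f (Inl ` W)"
    using inj by (rule inj_on_subset) (auto simp: functigraph_vertices_def)
  ultimately have "card W \<le> card (W - {c})"
    using card_mono[of "Inr ` (W - {c})" "f ` Inl ` W"] finite_W
    by (simp add: card_image inj_on_def)
  then show False
    using finite_W c_in_W card_W_pos by (simp add: card_Diff_singleton)
qed

lemma automorphism_image_first_copy:
  assumes f: "f \<in> automorphisms FV FE"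
  shows "f ` Inl ` W = Inl ` W"
proof (rule endo_inj_surj)
  show "inj_on f (Inl ` W)"
    using f by (auto simp: automorphisms_def bij_betw_def functigraph_vertices_def
        intro: inj_on_subset)
qed (use finite_W automorphism_first_copy_into_first_copy[OF f] in auto)

lemma automorphism_image_second_copy:
  assumes f: "f \<in> automorphisms FV FE"
  shows "f ` Inr ` W = Inr ` W"
proof -
  have "bij_betw f FV FV" using f by (simp add: automorphisms_def)
  moreover have "bij_betw f (Inl ` W) (Inl ` W)"
    using calculation automorphism_image_first_copy[OF f]
    by (auto simp: bij_betw_def functigraph_vertices_def intro: inj_on_subset)
  ultimately have "bij_betw f (FV - Inl ` W) (FV - Inl ` W)"
    by (rule bij_betw_DiffI) (auto simp: functigraph_vertices_def)
  moreover have "FV - Inl ` W = Inr ` W" by (auto simp: functigraph_vertices_def)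
  ultimately show ?thesis by (simp add: bij_betw_def)
qed

lemma automorphism_decomposition:
  assumes f: "f \<in> automorphisms FV FE"
  shows "\<exists>\<sigma>\<in>automorphisms W E. \<exists>\<tau>\<in>automorphisms W E. \<tau> c = c \<and>
    (\<forall>v\<in>FV. f v = map_sum \<sigma> \<tau> v)"
proof -
  obtain \<sigma> where \<sigma>: "\<sigma> \<in> automorphisms W E" "\<forall>x\<in>W. f (Inl x) = Inl (\<sigma> x)"
    using automorphism_induced_on_copy[OF f _ _ automorphism_image_first_copy[OF f]]
    by (auto simp: functigraph_vertices_def)
  obtain \<tau> where \<tau>: "\<tau> \<in> automorphisms W E" "\<forall>x\<in>W. f (Inr x) = Inr (\<tau> x)"
    using automorphism_induced_on_copy[OF f _ _ automorphism_image_second_copy[OF f]]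
    by (auto simp: functigraph_vertices_def)
  have "\<tau> c = c" using \<tau>(2) automorphism_fixes_hub[OF f] c_in_W by auto
  moreover have "\<forall>v\<in>FV. f v = map_sum \<sigma> \<tau> v"
    using \<sigma>(2) \<tau>(2) by (auto simp: functigraph_vertices_def)
  ultimately show ?thesis using \<sigma>(1) \<tau>(1) by blast
qed

lemma map_sum_automorphism:
  assumes \<sigma>: "\<sigma> \<in> automorphisms W E" and \<tau>: "\<tau> \<in> automorphisms W E" and "\<tau> c = c"
  shows "map_sum \<sigma> \<tau> \<in> automorphisms FV FE"
proof -
  have b\<sigma>: "bij_betw \<sigma> W W" and b\<tau>: "bij_betw \<tau> W W"
    and out\<sigma>: "\<And>x. x \<notin> W \<Longrightarrow> \<sigma> x = x" and out\<tau>: "\<And>x. x \<notin> W \<Longrightarrow> \<tau> x = x"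
    and e\<sigma>: "\<And>u v. u \<in> W \<Longrightarrow> v \<in> W \<Longrightarrow> E u v \<longleftrightarrow> E (\<sigma> u) (\<sigma> v)"
    and e\<tau>: "\<And>u v. u \<in> W \<Longrightarrow> v \<in> W \<Longrightarrow> E u v \<longleftrightarrow> E (\<tau> u) (\<tau> v)"
    using \<sigma> \<tau> by (auto simp: automorphisms_def)
  have "bij_betw (map_sum \<sigma> \<tau>) FV FV"
    using bij_betw_map_sum[OF b\<sigma> b\<tau>] by (simp add: functigraph_vertices_def Plus_def)
  moreover have "map_sum \<sigma> \<tau> v = v" if "v \<notin> FV" for v
    using that out\<sigma> out\<tau> by (cases v) (auto simp: functigraph_vertices_def)
  moreover have "FE u v \<longleftrightarrow> FE (map_sum \<sigma> \<tau> u) (map_sum \<sigma> \<tau> v)" if "u \<in> FV" "v \<in> FV" for u v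
  proof -
    have \<tau>_c: "\<tau> y = c \<longleftrightarrow> y = c" if "y \<in> W" for y
      using b\<tau> \<open>\<tau> c = c\<close> c_in_W that by (metis bij_betw_def inj_onD)
    have \<sigma>_W: "\<sigma> x \<in> W" if "x \<in> W" for x
      using b\<sigma> that by (simp add: bij_betw_apply)
    show ?thesis
    proof (cases u; cases v)
      fix x y assume "u = Inl x" "v = Inl y"
      then show ?thesis using that e\<sigma>[of x y] by (simp add: functigraph_vertices_def image_iff)
    next
      fix x y assume "u = Inr x" "v = Inr y"
      then show ?thesis using that e\<tau>[of x y] by (simp add: functigraph_vertices_def image_iff)
    next
      fix x y assume "u = Inl x" "v = Inr y"
      then show ?thesis using that \<tau>_c[of y] \<sigma>_W[of x] g_constant
        by (auto simp: functigraph_vertices_def)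
    next
      fix x y assume "u = Inr x" "v = Inl y"
      then show ?thesis using that \<tau>_c[of x] \<sigma>_W[of y] g_constant
        by (auto simp: functigraph_vertices_def)
    qed
  qed
  ultimately show ?thesis by (simp add: automorphisms_def)
qed

lemma fixing_number_functigraph_le: "fixing_number FV FE \<le> 2 * fixing_number W E"
proof -
  obtain S where S: "fixing_set W E S" "card S = fixing_number W E"
    using minimum_fixing_set_exists by blast
  then have "S \<subseteq> W" "finite S" using finite_W by (auto simp: fixing_set_def finite_subset)
  have "fixing_set FV FE (S <+> S)"
    unfolding fixing_set_def
  proof (intro conjI ballI impI)
    show "S <+> S \<subseteq> FV" using \<open>S \<subseteq> W\<close> by (auto simp: functigraph_vertices_def)
    fix f v assume f: "f \<in> automorphisms FV FE" and "\<forall>s\<in>S <+> S. f s = s" and "v \<in> FV"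
    obtain \<sigma> \<tau> where "\<sigma> \<in> automorphisms W E" "\<tau> \<in> automorphisms W E"
      and f_eq: "\<forall>v\<in>FV. f v = map_sum \<sigma> \<tau> v"
      using automorphism_decomposition[OF f] by blast
    moreover have "\<forall>s\<in>S. \<sigma> s = s" "\<forall>s\<in>S. \<tau> s = s"
      using \<open>\<forall>s\<in>S <+> S. f s = s\<close> f_eq \<open>S \<subseteq> W\<close> by (force simp: functigraph_vertices_def)+
    ultimately have "\<forall>x\<in>W. \<sigma> x = x" "\<forall>x\<in>W. \<tau> x = x"
      using S(1) by (auto simp: fixing_set_def)
    then show "f v = v" using f_eq \<open>v \<in> FV\<close> by (auto simp: functigraph_vertices_def)
  qed
  then have "fixing_number FV FE \<le> card (S <+> S)" by (rule fixing_number_le_card)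
  then show ?thesis using S(2) \<open>finite S\<close> by (simp add: card_Plus)
qed

lemma fixing_number_le_functigraph: "2 * fixing_number W E \<le> fixing_number FV FE + 1"
proof -
  obtain S where S: "fixing_set FV FE S" "card S = fixing_number FV FE"
    using minimum_fixing_set_exists by blast
  have S_fixes: "\<forall>v\<in>FV. f v = v" if "f \<in> automorphisms FV FE" "\<forall>s\<in>S. f s = s" for f
    using S(1) that by (simp add: fixing_set_def)
  define A B where "A = Inl -` S" and "B = Inr -` S"
  have "S \<subseteq> FV" using S(1) by (simp add: fixing_set_def)
  then have "A \<subseteq> W" "B \<subseteq> W" by (auto simp: A_def B_def functigraph_vertices_def)
  then have "finite A" "finite B" using finite_W by (metis finite_subset)+
  have S_eq: "S = A <+> B"
  proof
    show "S \<subseteq> A <+> B"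
    proof
      fix v assume "v \<in> S" then show "v \<in> A <+> B" by (cases v) (auto simp: A_def B_def)
    qed
  qed (auto simp: A_def B_def)
  have fixes_copy: "\<forall>x\<in>W. \<sigma> x = x \<and> \<tau> x = x"
    if "\<sigma> \<in> automorphisms W E" "\<tau> \<in> automorphisms W E" "\<tau> c = c"
      "\<forall>x\<in>A. \<sigma> x = x" "\<forall>x\<in>B. \<tau> x = x" for \<sigma> \<tau>
  proof -
    have "\<forall>s\<in>S. map_sum \<sigma> \<tau> s = s" using that(4,5) by (auto simp: S_eq)
    then have "\<forall>v\<in>FV. map_sum \<sigma> \<tau> v = v"
      using S_fixes map_sum_automorphism[OF that(1-3)] by blast
    then show ?thesis
      unfolding functigraph_vertices_def by (metis UnCI imageI map_sum.simps sum.inject)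
  qed
  have id_aut: "id \<in> automorphisms W E" by (simp add: automorphisms_def)
  have "fixing_set W E A"
    using \<open>A \<subseteq> W\<close> fixes_copy[OF _ id_aut] unfolding fixing_set_def by simp
  moreover have "fixing_set W E (insert c B)"
    using \<open>B \<subseteq> W\<close> c_in_W fixes_copy[OF id_aut] unfolding fixing_set_def by simp
  ultimately have "fixing_number W E \<le> card A" "fixing_number W E \<le> card (insert c B)"
    by (auto intro: fixing_number_le_card)
  moreover have "card (insert c B) \<le> card B + 1" using \<open>finite B\<close> by (simp add: card_insert_if)
  moreover have "card S = card A + card B" using S_eq \<open>finite A\<close> \<open>finite B\<close> by (simp add: card_Plus)
  ultimately show ?thesis using S(2) by linarith
qed

end

section \<open>Joins\<close>

lemma connected_graph_join:
  assumes "simple_graph V1 E1" "V1 \<noteq> {}" "simple_graph V2 E2" "V2 \<noteq> {}"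
  shows "connected_graph (join_vertices V1 V2) (join_edges V1 E1 V2 E2)"
proof -
  obtain a b where "a \<in> V1" "b \<in> V2" using assms(2,4) by blast
  let ?V = "join_vertices V1 V2" and ?E = "join_edges V1 E1 V2 E2"
  have "finite ?V" using assms(1,3) by (simp add: join_vertices_def simple_graph_def)
  moreover have "u \<in> ?V \<and> v \<in> ?V" "?E v u" if "?E u v" for u v
    using that assms(1,3) by (cases u; cases v; simp add: join_vertices_def simple_graph_def)+
  moreover have "\<not> ?E u u" for u
    using assms(1,3) by (cases u) (simp_all add: simple_graph_def)
  moreover have "?E\<^sup>*\<^sup>* u v" if "u \<in> ?V" "v \<in> ?V" for u v
  proof -
    have "?E u v \<or> (\<exists>w\<in>{Inl a, Inr b}. ?E u w \<and> ?E w v)"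
      using that \<open>a \<in> V1\<close> \<open>b \<in> V2\<close> by (cases u; cases v) (auto simp: join_vertices_def)
    then show ?thesis by (metis converse_rtranclp_into_rtranclp r_into_rtranclp)
  qed
  ultimately show ?thesis
    using assms(2) by (auto simp: connected_graph_def simple_graph_def join_vertices_def)
qed

theorem proposition3p13:
  fixes V1 :: "'a set" and E1 :: "'a \<Rightarrow> 'a \<Rightarrow> bool"
    and V2 :: "'b set" and E2 :: "'b \<Rightarrow> 'b \<Rightarrow> bool"
    and g :: "'a + 'b \<Rightarrow> 'a + 'b"
  assumes "connected_graph V1 E1"
    and "connected_graph V2 E2"
    and "g ` join_vertices V1 V2 \<subseteq> join_vertices V1 V2"
    and "\<exists>c\<in>join_vertices V1 V2. \<forall>u\<in>join_vertices V1 V2. g u = c"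
  shows "\<exists>i\<in>{0::int, 1}.
    int (fixing_number (functigraph_vertices (join_vertices V1 V2))
                       (functigraph_edges (join_vertices V1 V2) (join_edges V1 E1 V2 E2) g))
    = 2 * int (fixing_number (join_vertices V1 V2) (join_edges V1 E1 V2 E2)) - i"
proof -
  obtain c where c: "c \<in> join_vertices V1 V2" "\<forall>u\<in>join_vertices V1 V2. g u = c"
    using assms(4) by blast
  obtain a b where "a \<in> V1" "b \<in> V2"
    using assms(1,2) by (auto simp: connected_graph_def)
  then have "join_vertices V1 V2 \<noteq> {c}"
    unfolding join_vertices_def by (metis UnCI imageI singletonD sum.distinct(1))
  moreover have "connected_graph (join_vertices V1 V2) (join_edges V1 E1 V2 E2)"
    using assms(1,2) by (intro connected_graph_join) (auto simp: connected_graph_def)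
  ultimately interpret constant_functigraph "join_vertices V1 V2" "join_edges V1 E1 V2 E2" g c
    using c by unfold_locales auto
  show ?thesis
    using fixing_number_functigraph_le fixing_number_le_functigraph
    by (intro bexI[of _ "2 * int (fixing_number (join_vertices V1 V2) (join_edges V1 E1 V2 E2))
        - int (fixing_number FV FE)"]) auto
qed

end
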